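(* Let $p$ be an odd prime, $s$ a nonnegative integer, and $N,n$ positive integers with $\gcd(n,p)=1$. Then $$E_{np^N+s}\equiv E_{np^{N-1}+s}\pmod{p^N},$$ i.e. the difference lies in $p^N\mathbb Z_p$.
   Context: The Euler numbers $E_m$ are defined by $\frac{2}{e^t+1}=\sum_{m\ge0}E_m\frac{t^m}{m!}$. *)

theory Defs
  imports "HOL-Computational_Algebra.Computational_Algebra"
begin

definition euler_num :: "nat \<Rightarrow> rat" where
  "euler_num m = fact m * fps_nth (2 / (fps_exp 1 + 1)) m"

text \<open>Congruence of rationals modulo p^N in Z_p: the difference lies in p^N Z_p,
  i.e. it equals p^N * a / b with integers a, b and b not divisible by p.\<close>
definition rat_cong_ppow :: "nat \<Rightarrow> nat \<Rightarrow> rat \<Rightarrow> rat \<Rightarrow> bool" where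
  "rat_cong_ppow p N x y \<longleftrightarrow>
     (\<exists>a b :: int. \<not> (int p dvd b) \<and> x - y = of_int (int p ^ N) * of_int a / of_int b)"

end

theory Submission
  imports Defs "HOL-Number_Theory.Number_Theory"
begin

text \<open>For odd \<open>k\<close> the quotient \<open>(e\<^sup>k\<^sup>t + 1) / (e\<^sup>t + 1)\<close> is the alternating sum
  \<open>\<Sum>j<k. (-1)\<^sup>j e\<^sup>j\<^sup>t\<close>, so \<open>2/(e\<^sup>t + 1) = 2/(e\<^sup>k\<^sup>t + 1) \<cdot> \<Sum>j<k. (-1)\<^sup>j e\<^sup>j\<^sup>t\<close>.
  Comparing coefficients, and using that \<open>2\<^sup>m E\<^sub>m\<close> is an integer, gives for \<open>k = p\<^sup>N\<close> the
  congruence \<open>2\<^sup>m E\<^sub>m \<equiv> 2\<^sup>m \<Sum>j<k. (-1)\<^sup>j j\<^sup>m (mod p\<^sup>N)\<close>. By Euler's theorem the right-hand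
  side depends only on \<open>m\<close> modulo \<open>\<phi>(p\<^sup>N)\<close> once \<open>m \<ge> N\<close>, and the two indices
  \<open>n p\<^sup>N + s\<close> and \<open>n p\<^sup>N\<^sup>-\<^sup>1 + s\<close> differ by \<open>n \<phi>(p\<^sup>N)\<close>. As \<open>p\<close> is odd, powers of 2 are
  \<open>p\<close>-adic units, so the congruence passes to the Euler numbers themselves.\<close>

lemma alternating_geometric_sum:
  fixes x :: "'a::comm_ring_1"
  shows "(\<Sum>j<k. (- x) ^ j) * (x + 1) = 1 - (- x) ^ k"
  using one_diff_power_eq[of "- x" k] by (simp add: algebra_simps)

lemma fact_fps_mult_nth:
  fixes f g :: "'a::field_char_0 fps"
  shows "fact m * (f * g) $ m =
    (\<Sum>i\<le>m. of_nat (m choose i) * (fact i * f $ i) * (fact (m - i) * g $ (m - i)))"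
  unfolding fps_mult_nth sum_distrib_left atLeast0AtMost
proof (rule sum.cong[OF refl])
  fix i assume "i \<in> {..m}"
  then have "of_nat (m choose i) * fact i * fact (m - i) = (fact m :: 'a)"
    by (simp add: binomial_fact)
  then show "fact m * (f $ i * g $ (m - i)) =
      of_nat (m choose i) * (fact i * f $ i) * (fact (m - i) * g $ (m - i))"
    by (metis (no_types, lifting) mult.assoc mult.left_commute)
qed

lemma fps_two_div_exp_plus_one_scale:
  fixes k :: nat
  assumes "odd k"
  shows "2 / (fps_exp 1 + 1) =
    (2 / (fps_exp 1 + 1) oo fps_const (of_nat k) * fps_X) * (\<Sum>j<k. (- fps_exp 1) ^ j :: 'a::field_char_0 fps)"
    (is "?F = (?F oo ?kX) * ?S")
proof -
  let ?u = "fps_exp 1 + 1 :: 'a fps"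
  have unit: "is_unit ?u" by (simp add: fps_is_unit_iff)
  have F: "?F * ?u = 2" using unit by simp
  have "(?F oo ?kX) * (fps_exp (of_nat k) + 1) = (?F * ?u) oo ?kX"
    by (subst fps_compose_mult_distrib) (simp_all add: fps_compose_add_distrib)
  also have "\<dots> = 2" unfolding F by simp
  finally have scaled: "(?F oo ?kX) * (fps_exp (of_nat k) + 1) = 2" .
  have "?S * ?u = fps_exp (of_nat k) + 1"
    using assms by (simp add: alternating_geometric_sum fps_exp_power_mult)
  then have "(?F oo ?kX) * ?S * ?u = ?F * ?u"
    by (simp add: mult.assoc scaled F)
  moreover have "?u \<noteq> 0" using unit by (metis not_is_unit_0)
  ultimately show ?thesis by (metis mult_right_cancel)
qed

lemma euler_num_recurrence:
  "(\<Sum>i\<le>m. of_nat (m choose i) * euler_num i) + euler_num m = (if m = 0 then 2 else 0)"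
proof -
  let ?F = "2 / (fps_exp 1 + 1) :: rat fps"
  have "?F * (fps_exp 1 + 1) = 2" by (simp add: fps_is_unit_iff)
  then have "(if m = 0 then 2 else 0) = fact m * (?F * (fps_exp 1 + 1)) $ m"
    by (simp add: numeral_fps_const)
  also have "\<dots> = (\<Sum>i\<le>m. of_nat (m choose i) * euler_num i + (if i = m then euler_num m else 0))"
    unfolding fact_fps_mult_nth euler_num_def by (intro sum.cong) auto
  also have "\<dots> = (\<Sum>i\<le>m. of_nat (m choose i) * euler_num i) + euler_num m"
    by (simp add: sum.distrib)
  finally show ?thesis by simp
qed

lemma euler_num_0 [simp]: "euler_num 0 = 1"
  using euler_num_recurrence[of 0] by simp

lemma two_power_mult_euler_num_Ints: "2 ^ m * euler_num m \<in> \<int>"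
proof (induction m rule: less_induct)
  case (less m)
  show ?case
  proof (cases m)
    case (Suc m')
    have "(\<Sum>i\<le>m'. of_nat (m choose i) * euler_num i) + 2 * euler_num m = 0"
      using euler_num_recurrence[of m] by (simp add: Suc)
    then have rec: "2 * euler_num m = - (\<Sum>i\<le>m'. of_nat (m choose i) * euler_num i)"
      by (simp add: eq_neg_iff_add_eq_0 add.commute)
    have "2 ^ m * euler_num m = 2 ^ m' * (2 * euler_num m)"
      by (simp add: Suc)
    also have "\<dots> = - (\<Sum>i\<le>m'. 2 ^ m' * (of_nat (m choose i) * euler_num i))"
      by (simp add: rec sum_distrib_left)
    also have "\<dots> = - (\<Sum>i\<le>m'. of_nat (m choose i) * 2 ^ (m' - i) * (2 ^ i * euler_num i))"
      by (intro arg_cong[where f = uminus] sum.cong refl) (simp flip: power_add)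
    also have "\<dots> \<in> \<int>"
    proof (intro Ints_minus Ints_sum)
      fix i assume "i \<in> {..m'}"
      then have "2 ^ i * euler_num i \<in> \<int>" using less.IH Suc by simp
      then show "of_nat (m choose i) * 2 ^ (m' - i) * (2 ^ i * euler_num i) \<in> \<int>"
        by (rule Ints_mult[rotated]) simp
    qed
    finally show ?thesis .
  qed simp
qed

definition alt_power_sum :: "nat \<Rightarrow> nat \<Rightarrow> int" where
  "alt_power_sum k l = (\<Sum>j<k. (-1) ^ j * int j ^ l)"

lemma fact_alternating_exp_sum_nth:
  "fact l * (\<Sum>j<k. (- fps_exp 1) ^ j) $ l = (of_int (alt_power_sum k l) :: 'a::field_char_0)"
proof -
  have "((- fps_exp 1) ^ j) $ l = ((-1) ^ j * of_nat j ^ l / fact l :: 'a)" for j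
    by (simp add: uminus_power_if fps_exp_power_mult)
  then show ?thesis
    by (simp add: alt_power_sum_def fps_sum_nth sum_distrib_left)
qed

lemma euler_num_scale:
  assumes "odd k"
  shows "euler_num m =
    (\<Sum>i\<le>m. of_nat (m choose i) * of_nat k ^ i * euler_num i * of_int (alt_power_sum k (m - i)))"
proof -
  let ?F = "2 / (fps_exp 1 + 1) :: rat fps"
  let ?S = "\<Sum>j<k. (- fps_exp 1) ^ j :: rat fps"
  have "euler_num m = fact m * ((?F oo fps_const (of_nat k) * fps_X) * ?S) $ m"
    unfolding euler_num_def by (subst fps_two_div_exp_plus_one_scale[OF assms]) (rule refl)
  also have "\<dots> = (\<Sum>i\<le>m. of_nat (m choose i) * (fact i * (?F oo fps_const (of_nat k) * fps_X) $ i)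
      * (fact (m - i) * ?S $ (m - i)))"
    by (rule fact_fps_mult_nth)
  also have "\<dots> = (\<Sum>i\<le>m. of_nat (m choose i) * of_nat k ^ i * euler_num i * of_int (alt_power_sum k (m - i)))"
    unfolding fps_nth_compose_linear fact_alternating_exp_sum_nth euler_num_def by (simp only: mult_ac)
  finally show ?thesis .
qed

definition euler_scaled :: "nat \<Rightarrow> int" where
  "euler_scaled m = \<lfloor>2 ^ m * euler_num m\<rfloor>"

lemma of_int_euler_scaled: "of_int (euler_scaled m) = 2 ^ m * euler_num m"
  using two_power_mult_euler_num_Ints[of m] by (auto simp: euler_scaled_def elim: Ints_cases)

lemma euler_scaled_cong_alt_power_sum:
  assumes "odd k"
  shows "[euler_scaled m = 2 ^ m * alt_power_sum k m] (mod int k)"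
proof -
  let ?term = "\<lambda>i. int (m choose i) * int k ^ i * 2 ^ (m - i) * euler_scaled i * alt_power_sum k (m - i)"
  have "(of_int (euler_scaled m) :: rat) =
      (\<Sum>i\<le>m. of_nat (m choose i) * of_nat k ^ i * 2 ^ (m - i) * (2 ^ i * euler_num i) * of_int (alt_power_sum k (m - i)))"
    unfolding of_int_euler_scaled euler_num_scale[OF assms, of m] sum_distrib_left
    by (intro sum.cong refl) (simp add: mult_ac flip: power_add)
  also have "\<dots> = of_int (\<Sum>i\<le>m. ?term i)"
    by (simp add: of_int_euler_scaled)
  finally have "euler_scaled m = (\<Sum>i\<le>m. ?term i)"
    by (simp only: of_int_eq_iff)
  also have "\<dots> = 2 ^ m * alt_power_sum k m + (\<Sum>i\<in>{1..m}. ?term i)"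
    by (simp add: atMost_atLeast0 sum.atLeast_Suc_atMost euler_scaled_def)
  finally have "euler_scaled m = 2 ^ m * alt_power_sum k m + (\<Sum>i\<in>{1..m}. ?term i)" .
  moreover have "int k dvd (\<Sum>i\<in>{1..m}. ?term i)"
    by (intro dvd_sum) (auto intro: dvd_mult2 dvd_mult dvd_power)
  ultimately show ?thesis
    by (simp add: cong_iff_dvd_diff)
qed

lemma power_add_totient_cong:
  fixes p N a q j :: nat
  assumes "prime p" and "N \<le> a"
  shows "[j ^ (a + q * totient (p ^ N)) = j ^ a] (mod p ^ N)"
proof (cases "p dvd j")
  case True
  have "[j ^ b = 0] (mod p ^ N)" if "N \<le> b" for b
    using True that by (simp add: cong_0_iff) (meson dvd_power_same le_imp_power_dvd dvd_trans)
  then show ?thesis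
    using assms(2) by (meson cong_sym cong_trans le_add1 order.trans)
next
  case False
  then have "coprime j (p ^ N)"
    using prime_imp_coprime[OF assms(1) False] by (simp add: ac_simps)
  then have "[j ^ totient (p ^ N) = 1] (mod p ^ N)"
    by (rule euler_theorem)
  then have "[j ^ a * (j ^ totient (p ^ N)) ^ q = j ^ a * 1 ^ q] (mod p ^ N)"
    by (intro cong_mult cong_pow cong_refl)
  then show ?thesis
    by (simp add: power_add mult.commute[of q] power_mult)
qed

lemma alt_power_sum_add_totient_cong:
  assumes "prime p" and "N \<le> l"
  shows "[alt_power_sum k (l + q * totient (p ^ N)) = alt_power_sum k l] (mod int (p ^ N))"
  unfolding alt_power_sum_def
proof (intro cong_sum cong_mult cong_refl)
  fix j
  show "[int j ^ (l + q * totient (p ^ N)) = int j ^ l] (mod int (p ^ N))"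
    using power_add_totient_cong[OF assms, where j = j and q = q] by (simp add: cong_int_iff flip: of_nat_power)
qed

lemma rat_cong_ppow_if_scaled_dvd:
  fixes c d :: int
  assumes "\<not> int p dvd d" and "int p ^ N dvd c" and "of_int c = of_int d * (x - y)"
  shows "rat_cong_ppow p N x y"
proof -
  obtain a where a: "c = int p ^ N * a"
    using assms(2) by blast
  have "d \<noteq> 0"
    using assms(1) by auto
  then have "x - y = of_int (int p ^ N) * of_int a / of_int d"
    using assms(3) by (simp add: a field_simps)
  then show ?thesis
    using assms(1) unfolding rat_cong_ppow_def by blast
qed

lemma odd_prime_not_dvd_two_power:
  assumes "prime p" and "odd p"
  shows "\<not> int p dvd 2 ^ m"
proof
  assume "int p dvd 2 ^ m"
  then have "p dvd 2 ^ m"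
    by (metis int_dvd_int_iff of_nat_numeral of_nat_power)
  then have "p dvd 2"
    by (rule prime_dvd_power[OF assms(1)])
  then show False
    using assms prime_ge_2_nat[of p] dvd_imp_le[of p 2] by auto
qed

lemma mult_prime_power_eq_add_totient:
  assumes "prime p" and "N > 0"
  shows "n * p ^ N = n * p ^ (N - 1) + n * totient (p ^ N)"
proof -
  obtain N' where N': "N = Suc N'"
    using assms(2) gr0_implies_Suc by blast
  obtain p' where p': "p = Suc p'"
    using prime_gt_0_nat[OF assms(1)] gr0_implies_Suc by blast
  show ?thesis
    using totient_prime_power_Suc[OF assms(1), of N'] by (simp add: N' p' algebra_simps)
qed

lemma le_mult_prime_power_pred:
  assumes "prime p" and "n > 0"
  shows "N \<le> n * p ^ (N - 1)"
proof -
  have "N \<le> 2 ^ (N - 1)"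
    using less_exp[of "N - 1"] by arith
  also have "\<dots> \<le> p ^ (N - 1)"
    using prime_ge_2_nat[OF assms(1)] by (simp add: power_mono)
  also have "\<dots> \<le> n * p ^ (N - 1)"
    using assms(2) by simp
  finally show ?thesis .
qed

lemma euler_scaled_add_totient_cong:
  assumes "prime p" and "odd p" and "N \<le> m"
  shows "[euler_scaled (m + q * totient (p ^ N)) = 2 ^ (q * totient (p ^ N)) * euler_scaled m]
    (mod int (p ^ N))"
proof -
  let ?t = "q * totient (p ^ N)" and ?k = "p ^ N"
  have "odd ?k"
    using assms(2) by simp
  have "[euler_scaled (m + ?t) = 2 ^ (m + ?t) * alt_power_sum ?k (m + ?t)] (mod int ?k)"
    by (rule euler_scaled_cong_alt_power_sum[OF \<open>odd ?k\<close>])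
  also have "[2 ^ (m + ?t) * alt_power_sum ?k (m + ?t) = 2 ^ (m + ?t) * alt_power_sum ?k m] (mod int ?k)"
    using alt_power_sum_add_totient_cong[OF assms(1,3)] by (rule cong_scalar_left)
  also have "2 ^ (m + ?t) * alt_power_sum ?k m = 2 ^ ?t * (2 ^ m * alt_power_sum ?k m)"
    by (simp add: power_add)
  also have "[2 ^ ?t * (2 ^ m * alt_power_sum ?k m) = 2 ^ ?t * euler_scaled m] (mod int ?k)"
    using cong_sym[OF euler_scaled_cong_alt_power_sum[OF \<open>odd ?k\<close>]] by (rule cong_scalar_left)
  finally show ?thesis .
qed

theorem corollary5p2:
  fixes p s N n :: nat
  assumes "prime p" and "odd p" and "N > 0" and "n > 0" and "coprime n p"
  shows "rat_cong_ppow p N (euler_num (n * p ^ N + s)) (euler_num (n * p ^ (N - 1) + s))"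
proof -
  define M where "M = n * p ^ (N - 1) + s"
  define t where "t = totient (p ^ N)"
  have shift: "n * p ^ N + s = M + n * t"
    using mult_prime_power_eq_add_totient[OF assms(1,3), of n] by (simp add: M_def t_def)
  have "N \<le> M"
    using le_mult_prime_power_pred[OF assms(1,4), of N] by (simp add: M_def)
  then have "int p ^ N dvd euler_scaled (M + n * t) - 2 ^ (n * t) * euler_scaled M"
    using euler_scaled_add_totient_cong[OF assms(1,2)] by (simp add: t_def cong_iff_dvd_diff)
  moreover have "of_int (euler_scaled (M + n * t) - 2 ^ (n * t) * euler_scaled M)
      = of_int (2 ^ (M + n * t)) * (euler_num (M + n * t) - euler_num M)"
    by (simp add: of_int_euler_scaled power_add algebra_simps)
  ultimately show ?thesis
    unfolding shift M_def[symmetric]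
    by (intro rat_cong_ppow_if_scaled_dvd[OF odd_prime_not_dvd_two_power[OF assms(1,2)]])
qed

end
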